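(* For an integer $j\ge1$ and $r\in(0,1)$, let $$B_j(r)=-1-2r+2jr-r^2-\frac{(1-r)^j}{(1+r)^{j-2}}.$$ For every integer $k>2$ the following hold. 1. There exists a unique $r(k)\in(0,1)$ with $B_k(r(k))=0$. Equivalently, $r(k)$ is the unique point in $(0,1)$ at which $K_k(r)=-\frac{1-r}{8(1+r)^2}B_k(r)$ vanishes. 2. $r(k)$ is a simple root, i.e. $B_k'(r(k))\neq0$. 3. $B_j(r(k))\neq0$ for every integer $j\ge1$ with $j\neq k$. Moreover, the coefficient $y_1=-\frac{3r+1}{4(1+r)^2}$ is nonzero. 4. If $k_1>k_2>2$, then $r(k_1)<r(k_2)$. *)

theory Defs
  imports "HOL-Analysis.Analysis"
begin

text \<open>B_j(r) = -1 - 2r + 2jr - r^2 - (1-r)^j / (1+r)^(j-2); the exponent j-2 may be -1 (j = 1),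
  so an integer power is used.\<close>
definition B :: "nat \<Rightarrow> real \<Rightarrow> real" where
  "B j r = -1 - 2*r + 2*real j*r - r^2 - (1 - r)^j / ((1 + r) powi (int j - 2))"

definition K :: "nat \<Rightarrow> real \<Rightarrow> real" where
  "K k r = - ((1 - r) / (8 * (1 + r)^2)) * B k r"

definition rk :: "nat \<Rightarrow> real" where
  "rk k = (THE r. 0 < r \<and> r < 1 \<and> B k r = 0)"

end

theory Submission
  imports Defs
begin

text \<open>The substitution \<open>x = (1 - r)/(1 + r)\<close>, a decreasing involution of \<open>(0,1)\<close>, turns \<open>B\<^sub>j(r)\<close>
  into \<open>(1 + r)\<^sup>2/2 \<cdot> (j(1 - x\<^sup>2) - 2 - 2x\<^sup>j)\<close>. The bracket is strictly decreasing in \<open>x \<in> [0,1]\<close>,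
  positive at \<open>0\<close> for \<open>j > 2\<close> and negative at \<open>1\<close>, which gives the unique, simple root; it is also
  strictly increasing in \<open>j\<close> for \<open>x \<in> (0,1)\<close>, which separates the roots of different \<open>B\<^sub>j\<close> and
  orders them.\<close>

definition cayley :: "real \<Rightarrow> real" where
  "cayley r = (1 - r) / (1 + r)"

definition B_reduced :: "nat \<Rightarrow> real \<Rightarrow> real" where
  "B_reduced j x = real j * (1 - x^2) - 2 - 2 * x^j"

lemma cayley_cayley: "r \<noteq> -1 \<Longrightarrow> cayley (cayley r) = r"
  by (auto simp: cayley_def field_simps)

lemma cayley_in_unit_interval: "0 < r \<Longrightarrow> r < 1 \<Longrightarrow> 0 < cayley r \<and> cayley r < 1"
  by (auto simp: cayley_def field_simps)

lemma cayley_strict_antimono: "-1 < r \<Longrightarrow> r < s \<Longrightarrow> cayley s < cayley r"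
  by (auto simp: cayley_def field_simps)

lemma has_field_derivative_cayley:
  "-1 < r \<Longrightarrow> (cayley has_field_derivative (-2 / (1 + r)^2)) (at r)"
  unfolding cayley_def by (auto intro!: derivative_eq_intros simp: field_simps power2_eq_square)

lemma B_eq_B_reduced:
  assumes "-1 < r"
  shows "B j r = (1 + r)^2 / 2 * B_reduced j (cayley r)"
proof -
  define c where "c = cayley r"
  have "1 + r \<noteq> 0" using assms by simp
  then have "(1 - r)^j / ((1 + r) powi (int j - 2)) = (1 + r)^2 * c^j"
    by (simp add: power_int_diff c_def cayley_def power_divide)
  then have B: "B j r = -1 - 2*r + 2*real j*r - r^2 - (1 + r)^2 * c^j"
    by (simp add: B_def)
  have "(1 + r)^2 * c^2 = (1 - r)^2"
    using \<open>1 + r \<noteq> 0\<close> by (simp add: c_def cayley_def power_divide)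
  then have four_r: "(1 + r)^2 * (1 - c^2) = 4 * r"
    by (simp add: right_diff_distrib power2_eq_square algebra_simps)
  have "(1 + r)^2 / 2 * (real j * (1 - c^2)) = real j / 2 * ((1 + r)^2 * (1 - c^2))"
    by (simp add: ac_simps)
  also have "\<dots> = 2 * real j * r" by (simp add: four_r)
  finally have linear: "(1 + r)^2 / 2 * (real j * (1 - c^2)) = 2 * real j * r" .
  have "(1 + r)^2 / 2 * B_reduced j c
      = (1 + r)^2 / 2 * (real j * (1 - c^2)) - (1 + r)^2 - (1 + r)^2 * c^j"
    unfolding B_reduced_def by (simp add: algebra_simps)
  moreover have "(1 + r)^2 = 1 + 2*r + r^2" by (simp add: power2_eq_square algebra_simps)
  ultimately show ?thesis using B linear unfolding c_def by linarith
qed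

lemma B_zero_iff_B_reduced_zero: "-1 < r \<Longrightarrow> B j r = 0 \<longleftrightarrow> B_reduced j (cayley r) = 0"
  by (simp add: B_eq_B_reduced)

lemma K_zero_iff_B_zero: "-1 < r \<Longrightarrow> r < 1 \<Longrightarrow> K k r = 0 \<longleftrightarrow> B k r = 0"
  by (simp add: K_def)

lemma B_reduced_strict_antimono:
  assumes "1 \<le> j" "0 \<le> x" "x < y" "y \<le> 1"
  shows "B_reduced j y < B_reduced j x"
proof -
  have "real j * (1 - y^2) < real j * (1 - x^2)"
    using assms by (simp add: power_strict_mono)
  moreover have "x^j \<le> y^j" using assms by (simp add: power_mono)
  ultimately show ?thesis unfolding B_reduced_def by linarith
qed

lemma B_reduced_root_unique:
  assumes "1 \<le> j" "0 \<le> x" "x \<le> 1" "0 \<le> y" "y \<le> 1"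
    and "B_reduced j x = 0" "B_reduced j y = 0"
  shows "x = y"
  using assms B_reduced_strict_antimono[of j x y] B_reduced_strict_antimono[of j y x]
  by (cases x y rule: linorder_cases) auto

lemma B_reduced_strict_mono_index:
  assumes "0 < x" "x < 1" "i < j"
  shows "B_reduced i x < B_reduced j x"
proof -
  have "B_reduced n x < B_reduced (Suc n) x" for n
  proof -
    have "B_reduced (Suc n) x - B_reduced n x = (1 - x^2) + 2 * x^n * (1 - x)"
      unfolding B_reduced_def by (simp add: algebra_simps)
    moreover have "0 < 1 - x^2" "0 < x^n * (1 - x)"
      using assms by (simp_all add: power_less_one_iff)
    ultimately show ?thesis by linarith
  qed
  then show ?thesis using lift_Suc_mono_less[of "\<lambda>n. B_reduced n x"] assms(3) by blast
qed

lemma B_reduced_root_exists: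
  assumes "2 < k"
  shows "\<exists>x. 0 < x \<and> x < 1 \<and> B_reduced k x = 0"
proof -
  have pos: "0 < B_reduced k 0" and neg: "B_reduced k 1 < 0"
    using assms by (simp_all add: B_reduced_def power_0_left)
  have "\<forall>x. 0 \<le> x \<and> x \<le> 1 \<longrightarrow> isCont (B_reduced k) x"
    unfolding B_reduced_def by (auto intro!: continuous_intros)
  with IVT2[of "B_reduced k" 1 0 0] pos neg
  obtain x where "0 \<le> x" "x \<le> 1" "B_reduced k x = 0" by auto
  with pos neg show ?thesis by (intro exI[of _ x]) (auto simp: order.order_iff_strict)
qed

lemma has_field_derivative_B_reduced:
  "(B_reduced j has_field_derivative (- 2 * real j * x - 2 * real j * x^(j - 1))) (at x)"
  unfolding B_reduced_def by (auto intro!: derivative_eq_intros simp: algebra_simps)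

lemma has_field_derivative_B:
  assumes "-1 < r"
  shows "(B j has_field_derivative
           (1 + r) * B_reduced j (cayley r) + 2 * real j * (cayley r + cayley r ^ (j - 1))) (at r)"
proof (rule has_field_derivative_transform_within_open[OF _ open_greaterThan[of "-1"]])
  have "((\<lambda>s. (1 + s)^2 / 2 * B_reduced j (cayley s)) has_field_derivative
          (1 + r) * B_reduced j (cayley r)
          + (1 + r)^2 / 2 * ((- 2 * real j * cayley r - 2 * real j * cayley r ^ (j - 1))
                               * (-2 / (1 + r)^2))) (at r)"
    by (rule derivative_eq_intros DERIV_chain2[OF has_field_derivative_B_reduced]
          has_field_derivative_cayley assms refl | simp)+
  moreover have "(1 + r)^2 / 2 * ((- 2 * real j * cayley r - 2 * real j * cayley r ^ (j - 1))
                                   * (-2 / (1 + r)^2))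
                  = 2 * real j * (cayley r + cayley r ^ (j - 1))"
    using assms by (simp add: field_simps)
  ultimately show "((\<lambda>s. (1 + s)^2 / 2 * B_reduced j (cayley s)) has_field_derivative
               (1 + r) * B_reduced j (cayley r) + 2 * real j * (cayley r + cayley r ^ (j - 1))) (at r)"
    by (simp only:)
qed (use assms B_eq_B_reduced in auto)

lemma ex1_B_root:
  assumes "2 < k"
  shows "\<exists>!r. 0 < r \<and> r < 1 \<and> B k r = 0"
proof -
  obtain x where x: "0 < x" "x < 1" "B_reduced k x = 0"
    using B_reduced_root_exists[OF assms] by blast
  let ?r = "cayley x"
  have r: "0 < ?r" "?r < 1" using cayley_in_unit_interval[OF x(1,2)] by auto
  have "B k ?r = 0" using x r by (simp add: B_zero_iff_B_reduced_zero cayley_cayley)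
  moreover have "s = ?r" if s: "0 < s" "s < 1" "B k s = 0" for s
  proof -
    have "B_reduced k (cayley s) = 0" using s by (simp add: B_zero_iff_B_reduced_zero)
    with x have "cayley s = x"
      using B_reduced_root_unique[of k] cayley_in_unit_interval[OF s(1,2)] assms by auto
    then show ?thesis using s by (metis cayley_cayley neg_0_less_iff_less not_one_less_zero)
  qed
  ultimately show ?thesis using r by blast
qed

lemma rk_root:
  assumes "2 < k"
  shows "0 < rk k" "rk k < 1" "B k (rk k) = 0"
  using theI'[OF ex1_B_root[OF assms]] unfolding rk_def[symmetric] by auto

lemma B_reduced_cayley_rk:
  assumes "2 < k"
  shows "0 < cayley (rk k)" "cayley (rk k) < 1" "B_reduced k (cayley (rk k)) = 0"
  using rk_root[OF assms] cayley_in_unit_interval B_zero_iff_B_reduced_zero by auto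

lemma deriv_B_rk_pos:
  assumes "2 < k"
  shows "0 < deriv (B k) (rk k)"
proof -
  let ?x = "cayley (rk k)"
  have "deriv (B k) (rk k) = 2 * real k * (?x + ?x ^ (k - 1))"
    using DERIV_imp_deriv[OF has_field_derivative_B, of "rk k" k] rk_root[OF assms]
      B_reduced_cayley_rk[OF assms] by simp
  moreover have "0 < ?x + ?x ^ (k - 1)"
    using B_reduced_cayley_rk(1)[OF assms] by (meson add_pos_pos zero_less_power)
  ultimately show ?thesis using assms by simp
qed

lemma B_rk_nonzero:
  assumes "2 < k" "j \<noteq> k"
  shows "B j (rk k) \<noteq> 0"
proof -
  note x = B_reduced_cayley_rk[OF assms(1)]
  have "B_reduced j (cayley (rk k)) \<noteq> 0"
    using B_reduced_strict_mono_index[OF x(1,2), of j k] B_reduced_strict_mono_index[OF x(1,2), of k j]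
      x(3) assms(2) by (cases j k rule: linorder_cases) auto
  then show ?thesis using rk_root[OF assms(1)] by (simp add: B_zero_iff_B_reduced_zero)
qed

lemma rk_strict_antimono:
  assumes "k2 < k1" "2 < k2"
  shows "rk k1 < rk k2"
proof -
  note x1 = B_reduced_cayley_rk[of k1] and x2 = B_reduced_cayley_rk[of k2]
  have "0 < B_reduced k1 (cayley (rk k2))"
    using B_reduced_strict_mono_index[OF x2(1,2) assms(1)] x2(3) assms(2) by simp
  then have "cayley (rk k2) < cayley (rk k1)"
    using B_reduced_strict_antimono[of k1 "cayley (rk k1)" "cayley (rk k2)"] x1 x2 assms
    by (cases "cayley (rk k2)" "cayley (rk k1)" rule: linorder_cases) auto
  moreover have "-1 < rk k2" "-1 < rk k1" using rk_root[of k1] rk_root[of k2] assms by auto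
  ultimately show ?thesis
    using cayley_strict_antimono[of "rk k2" "rk k1"] by (cases "rk k1" "rk k2" rule: linorder_cases) auto
qed

theorem mainTheorem6:
  shows "(\<forall>k::nat. k > 2 \<longrightarrow>
            (\<exists>!r. 0 < r \<and> r < 1 \<and> B k r = 0)
          \<and> (\<exists>!r. 0 < r \<and> r < 1 \<and> K k r = 0)
          \<and> 0 < rk k \<and> rk k < 1 \<and> B k (rk k) = 0
          \<and> deriv (B k) (rk k) \<noteq> 0
          \<and> (\<forall>j::nat. j \<ge> 1 \<and> j \<noteq> k \<longrightarrow> B j (rk k) \<noteq> 0)
          \<and> - (3 * rk k + 1) / (4 * (1 + rk k)^2) \<noteq> 0)
       \<and> (\<forall>k1 k2::nat. k1 > k2 \<and> k2 > 2 \<longrightarrow> rk k1 < rk k2)"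
proof (intro conjI allI impI)
  fix k :: nat
  assume k: "k > 2"
  note r = rk_root[OF k]
  show "\<exists>!r. 0 < r \<and> r < 1 \<and> B k r = 0" by (rule ex1_B_root[OF k])
  then show "\<exists>!r. 0 < r \<and> r < 1 \<and> K k r = 0"
    by (smt (verit, best) K_zero_iff_B_zero)
  show "0 < rk k" "rk k < 1" "B k (rk k) = 0" by (fact r)+
  show "deriv (B k) (rk k) \<noteq> 0" using deriv_B_rk_pos[OF k] by simp
  show "B j (rk k) \<noteq> 0" if "1 \<le> j \<and> j \<noteq> k" for j using B_rk_nonzero[OF k] that by blast
  show "- (3 * rk k + 1) / (4 * (1 + rk k)^2) \<noteq> 0" using r by simp
next
  fix k1 k2 :: nat
  assume "k2 < k1 \<and> 2 < k2"
  then show "rk k1 < rk k2" using rk_strict_antimono by blast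
qed

end
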